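(* Consider a platoon of a leader moving at constant speed and $N$ heterogeneous followers with all states measured ($c_p=c_v=c_a=1$). For follower $i\in\{1,\dots,N\}$ with inertial time lag $\tau_i>0$ let $$A_i=\begin{bmatrix}0&1&0\\0&0&1\\0&0&-1/\tau_i\end{bmatrix},\qquad B_i=\begin{bmatrix}0\\0\\1/\tau_i\end{bmatrix}.$$ Suppose the information flow topology among the followers is a directed acyclic graph with $d_{ii}+p_{ii}>0$ for every $i$. For each $i$, let $\varepsilon_i>0$, let $P_i\succeq 0$ be a root of the algebraic Riccati equation $$P_iA_i+A_i^TP_i-P_iB_iB_i^TP_i+\varepsilon_iI_3=0,$$ and set the feedback gain $k_i=[k_{ip},k_{iv},k_{ia}]^T$ by $k_i^T=\alpha_iB_i^TP_i$. If $\alpha_i\ge\frac{1}{2(d_{ii}+p_{ii})}$ for all $i\in\{1,\dots,N\}$, then the closed-loop system $$\begin{bmatrix}\dot{\hat p}\\ \dot{\hat v}\\ \dot{\hat a}\end{bmatrix}=\begin{bmatrix}0&I_N&0\\0&0&I_N\\-T_pG&-T_vG&-\Delta-T_aG\end{bmatrix}\begin{bmatrix}\hat p\\ \hat v\\ \hat a\end{bmatrix}$$ is asymptotically stable, where $\Delta=\mathrm{diag}\{1/\tau_1,\dots,1/\tau_N\}$, $T_\sharp=\mathrm{diag}\{k_{1\sharp}/\tau_1,\dots,k_{N\sharp}/\tau_N\}$ for $\sharp\in\{p,v,a\}$, and $G=\mathcal{L}+\mathcal{P}$.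
   Context: The information flow among followers is a directed graph on $\{1,\dots,N\}$ with adjacency matrix $\mathcal{A}=[a_{ij}]$, $a_{ij}=1$ if follower $i$ receives information from follower $j$, else $0$, and $a_{ii}=0$. The degree matrix is $\mathcal{D}=\mathrm{diag}\{d_{11},\dots,d_{NN}\}$ with $d_{ii}=\sum_{k=1}^N a_{ik}$, and the Laplacian is $\mathcal{L}=\mathcal{D}-\mathcal{A}$. The pinning matrix is $\mathcal{P}=\mathrm{diag}\{p_{11},\dots,p_{NN}\}$ with $p_{ii}=1$ if follower $i$ receives information from the leader, else $0$. A directed acyclic graph is a finite directed graph with no directed cycles. The vectors $\hat p,\hat v,\hat a\in\mathbb{R}^N$ collect the followers' position, velocity and acceleration tracking errors $\hat p_i=p_i-p_0+id_0$, $\hat v_i=v_i-v_0$, $\hat a_i=a_i$ under the controller $u_i=-k_i^T(\sum_j a_{ij}(\hat x_i-\hat x_j)+p_{ii}\hat x_i)$, $\hat x_i=[\hat p_i,\hat v_i,\hat a_i]^T$, for vehicle dynamics $\dot p_i=v_i$, $\dot v_i=a_i$, $\tau_i\dot a_i+a_i=u_i$. *)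

theory Defs
  imports "HOL-Analysis.Analysis"
begin

definition veh_A :: "real \<Rightarrow> real^3^3" where
  "veh_A tau = vector [vector [0, 1, 0], vector [0, 0, 1], vector [0, 0, - 1 / tau]]"

definition veh_B :: "real \<Rightarrow> real^1^3" where
  "veh_B tau = vector [vector [0], vector [0], vector [1 / tau]]"

definition psd :: "real^'m^'m \<Rightarrow> bool" where
  "psd P \<longleftrightarrow> transpose P = P \<and> (\<forall>x. 0 \<le> x \<bullet> (P *v x))"

definition riccati :: "real^3^3 \<Rightarrow> real^3^3 \<Rightarrow> real^1^3 \<Rightarrow> real \<Rightarrow> bool" where
  "riccati P A B eps \<longleftrightarrow>
     P ** A + transpose A ** P - P ** B ** transpose B ** P + eps *\<^sub>R mat 1 = 0"

definition diagm :: "('n::finite \<Rightarrow> real) \<Rightarrow> real^'n^'n" where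
  "diagm d = (\<chi> i j. if i = j then d i else 0)"

definition adjacency :: "real^'n^'n \<Rightarrow> bool" where
  "adjacency Adj \<longleftrightarrow> (\<forall>i j. Adj$i$j = 0 \<or> Adj$i$j = 1) \<and> (\<forall>i. Adj$i$i = 0)"

(* edge relation: (i,j) iff follower i receives information from follower j *)
definition edges :: "real^'n^'n \<Rightarrow> ('n \<times> 'n) set" where
  "edges Adj = {(i, j). Adj$i$j = 1}"

definition is_DAG :: "real^'n^'n \<Rightarrow> bool" where
  "is_DAG Adj \<longleftrightarrow> acyclic (edges Adj)"

definition degm :: "real^'n^'n \<Rightarrow> real^'n^'n" where
  "degm Adj = diagm (\<lambda>i. \<Sum>k\<in>UNIV. Adj$i$k)"

definition laplacian :: "real^'n^'n \<Rightarrow> real^'n^'n" where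
  "laplacian Adj = degm Adj - Adj"

definition pinning :: "real^'n^'n \<Rightarrow> bool" where
  "pinning Pm \<longleftrightarrow> (\<forall>i j. i \<noteq> j \<longrightarrow> Pm$i$j = 0) \<and> (\<forall>i. Pm$i$i = 0 \<or> Pm$i$i = 1)"

definition closed_loop ::
  "real^'n^'n \<Rightarrow> real^'n^'n \<Rightarrow> real^'n^'n \<Rightarrow> real^'n^'n \<Rightarrow> real^'n^'n
   \<Rightarrow> ((real^'n) \<times> (real^'n) \<times> (real^'n)) \<Rightarrow> ((real^'n) \<times> (real^'n) \<times> (real^'n))" where
  "closed_loop Tp Tv Ta Dl G = (\<lambda>(p, v, a).
      (v, a, - ((Tp ** G) *v p) - ((Tv ** G) *v v) - ((Dl + Ta ** G) *v a)))"

definition is_solution :: "('a::real_normed_vector \<Rightarrow> 'a) \<Rightarrow> (real \<Rightarrow> 'a) \<Rightarrow> bool" where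
  "is_solution f x \<longleftrightarrow> (\<forall>t\<ge>0. (x has_vector_derivative f (x t)) (at t within {0..}))"

definition asymptotically_stable :: "('a::real_normed_vector \<Rightarrow> 'a) \<Rightarrow> bool" where
  "asymptotically_stable f \<longleftrightarrow>
     (\<forall>e>0. \<exists>d>0. \<forall>x. is_solution f x \<and> norm (x 0) < d \<longrightarrow> (\<forall>t\<ge>0. norm (x t) < e)) \<and>
     (\<exists>d>0. \<forall>x. is_solution f x \<and> norm (x 0) < d \<longrightarrow> (x \<longlongrightarrow> 0) at_top)"

end

theory Submission
  imports Defs
begin

text \<open>
  In the coordinates z_i = (p_i, v_i, a_i) of follower i the closed loop reads
  z_i' = A_i z_i - alpha_i B_i B_i^T P_i (c_i z_i - sum_j a_ij z_j) with c_i = d_ii + p_ii.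
  Along it, the Riccati equation and 2 alpha_i c_i \<ge> 1 give for V_i = z_i^T P_i z_i the estimate
  V_i' \<le> - (eps_i / 2) |z_i|^2 + K_i sum_j a_ij |z_j|^2: follower i is only disturbed by the
  followers it listens to. As the graph is acyclic, its nodes can be ranked so that information flows
  from higher to lower rank, and weighting V_i by M^rank(i) with M large lets every coupling term be
  absorbed by the dissipation of its source. The weighted sum is a quadratic Lyapunov function with
  exponential decay; it is positive definite because P_i \<succeq> 0, the Riccati equation and
  eps_i > 0 force P_i to be positive definite.
\<close>

section \<open>Quadratic forms\<close>

lemma inner_matrix_vector_transpose:
  fixes M :: "real^'m::finite^'k::finite"
  shows "x \<bullet> (M *v y) = (transpose M *v x) \<bullet> y"
  by (simp add: dot_lmul_matrix)

lemma inner_real1: "(x::real^1) \<bullet> y = x $ 1 * y $ 1"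
  by (simp add: inner_vec_def)

lemma quadratic_form_commute:
  fixes Q :: "real^'m::finite^'m"
  assumes "transpose Q = Q"
  shows "x \<bullet> (Q *v y) = y \<bullet> (Q *v x)"
  by (metis assms inner_commute inner_matrix_vector_transpose)

lemma has_derivative_quadratic_form:
  fixes L :: "'a::real_normed_vector \<Rightarrow> real^'m::finite" and Q :: "real^'m^'m"
  assumes L: "bounded_linear L" and sym: "transpose Q = Q"
  shows "((\<lambda>y. L y \<bullet> (Q *v L y)) has_derivative (\<lambda>d. 2 * (L y \<bullet> (Q *v L d)))) (at y)"
proof -
  have "bounded_linear (\<lambda>d. Q *v L d)"
    using bounded_linear_compose[OF matrix_vector_mul_bounded_linear L] .
  then have "((\<lambda>y. L y \<bullet> (Q *v L y)) has_derivative (\<lambda>d. L y \<bullet> (Q *v L d) + L d \<bullet> (Q *v L y))) (at y)"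
    using L by (intro has_derivative_inner bounded_linear.has_derivative[OF _ has_derivative_ident])
  then show ?thesis
    by (simp add: quadratic_form_commute[OF sym, of "L _" "L y"])
qed

lemma psd_quadratic_form_eq_0_imp:
  fixes Q :: "real^'m::finite^'m"
  assumes psd: "psd Q" and z: "z \<bullet> (Q *v z) = 0"
  shows "Q *v z = 0"
proof -
  have sym: "transpose Q = Q" and nonneg: "\<And>x. 0 \<le> x \<bullet> (Q *v x)"
    using psd unfolding psd_def by auto
  define y where "y = Q *v z"
  have along_y: "0 \<le> - 2 * t * (y \<bullet> y) + t\<^sup>2 * (y \<bullet> (Q *v y))" for t :: real
  proof -
    have "0 \<le> (z - t *\<^sub>R y) \<bullet> (Q *v (z - t *\<^sub>R y))" by (rule nonneg)
    also have "\<dots> = z \<bullet> (Q *v z) - t * (z \<bullet> (Q *v y)) - t * (y \<bullet> (Q *v z)) + t\<^sup>2 * (y \<bullet> (Q *v y))"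
      by (simp add: algebra_simps power2_eq_square)
    also have "\<dots> = - 2 * t * (y \<bullet> y) + t\<^sup>2 * (y \<bullet> (Q *v y))"
      using z quadratic_form_commute[OF sym, of z y] by (simp add: y_def)
    finally show ?thesis .
  qed
  have "y \<bullet> y \<le> 0"
  proof (rule ccontr)
    assume "\<not> y \<bullet> y \<le> 0"
    define t where "t = (y \<bullet> y) / (y \<bullet> (Q *v y) + 1)"
    have "y \<bullet> y > 0" "y \<bullet> (Q *v y) \<ge> 0" using \<open>\<not> y \<bullet> y \<le> 0\<close> nonneg by auto
    then have "t > 0" and "t * (y \<bullet> (Q *v y)) < y \<bullet> y"
      by (auto simp: t_def field_simps)
    moreover have "2 * (y \<bullet> y) \<le> t * (y \<bullet> (Q *v y))"
      using along_y[of t] \<open>t > 0\<close> by (simp add: power2_eq_square algebra_simps)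
    ultimately show False using \<open>y \<bullet> y > 0\<close> by linarith
  qed
  then show ?thesis
    by (metis inner_eq_zero_iff inner_ge_zero order_antisym y_def)
qed

lemma pos_def_quadratic_form_bounds:
  fixes Q :: "real^'m::finite^'m"
  assumes pd: "\<And>z. z \<noteq> 0 \<Longrightarrow> z \<bullet> (Q *v z) > 0"
  obtains m U where "m > 0" "U > 0" "\<And>z. m * (z \<bullet> z) \<le> z \<bullet> (Q *v z)" "\<And>z. z \<bullet> (Q *v z) \<le> U * (z \<bullet> z)"
proof -
  let ?f = "\<lambda>z::real^'m. z \<bullet> (Q *v z)"
  have cont: "continuous_on (sphere 0 1) ?f"
    by (intro continuous_intros linear_continuous_on) auto
  obtain u0 where u0: "u0 \<in> sphere 0 1" "\<forall>y \<in> sphere 0 1. ?f u0 \<le> ?f y"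
    using continuous_attains_inf[OF compact_sphere _ cont] by auto
  obtain u1 where u1: "\<forall>y \<in> sphere 0 1. ?f y \<le> ?f u1"
    using continuous_attains_sup[OF compact_sphere _ cont] by blast
  have homog: "?f z = (z \<bullet> z) * ?f (z /\<^sub>R norm z)" if "z \<noteq> 0" for z
    using that by (simp add: matrix_vector_mult_scaleR power2_norm_eq_inner[symmetric] power2_eq_square field_simps)
  show ?thesis
  proof
    show "?f u0 > 0" using u0(1) pd[of u0] by fastforce
    show "max (?f u1) 1 > 0" by simp
    fix z :: "real^'m"
    have unit: "z /\<^sub>R norm z \<in> sphere 0 1" if "z \<noteq> 0" using that by simp
    show "?f u0 * (z \<bullet> z) \<le> ?f z"
      using homog[of z] mult_left_mono[OF bspec[OF u0(2) unit], of "z \<bullet> z"]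
      by (cases "z = 0") (auto simp: mult.commute)
    show "?f z \<le> max (?f u1) 1 * (z \<bullet> z)"
      using homog[of z] mult_left_mono[OF max.coboundedI1[OF bspec[OF u1 unit]], of "z \<bullet> z"]
      by (cases "z = 0") (auto simp: mult.commute)
  qed
qed

section \<open>Quadratic Lyapunov functions\<close>

lemma lyapunov_exponential_decay:
  fixes f :: "'a::real_normed_vector \<Rightarrow> 'a" and V :: "'a \<Rightarrow> real"
  assumes dV: "\<And>y. (V has_derivative DV y) (at y)"
    and decrease: "\<And>y. DV y (f y) \<le> - lam * V y"
    and sol: "is_solution f x" and t: "t \<ge> 0"
  shows "V (x t) \<le> exp (- lam * t) * V (x 0)"
proof -
  define g where "g s = exp (lam * s) * V (x s)" for s
  define D where "D s = exp (lam * s) * (lam * V (x s) + DV (x s) (f (x s)))" for s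
  have g_deriv: "(g has_derivative (\<lambda>h. h * D s)) (at s within {0..t})" if "0 \<le> s" for s
  proof -
    have xs: "(x has_derivative (\<lambda>h. h *\<^sub>R f (x s))) (at s within {0..})"
      using sol that unfolding is_solution_def has_vector_derivative_def by auto
    have "linear (DV (x s))"
      using dV has_derivative_bounded_linear bounded_linear.linear by blast
    then have "((\<lambda>s. V (x s)) has_derivative (\<lambda>h. h * DV (x s) (f (x s)))) (at s within {0..})"
      using has_derivative_compose[OF xs dV] by (simp add: linear_scale mult.commute)
    then have "((\<lambda>s. V (x s)) has_real_derivative DV (x s) (f (x s))) (at s within {0..})"
      by (simp add: has_field_derivative_def mult_commute_abs)
    then have "(g has_real_derivative D s) (at s within {0..})"
      unfolding g_def D_def by (auto intro!: derivative_eq_intros simp: algebra_simps)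
    then have "(g has_real_derivative D s) (at s within {0..t})"
      by (rule DERIV_subset) auto
    then show ?thesis by (simp add: has_field_derivative_def mult_commute_abs)
  qed
  then obtain \<xi> where "\<xi> \<in> {0..t}" "g t - g 0 = (t - 0) * D \<xi>"
    using mvt_very_simple[OF t, of g "\<lambda>s h. h * D s"] g_deriv by auto
  moreover have "D \<xi> \<le> 0"
    using decrease[of "x \<xi>"] by (simp add: D_def mult_nonneg_nonpos)
  ultimately have "exp (lam * t) * V (x t) \<le> V (x 0)"
    using t mult_nonneg_nonpos[of t "D \<xi>"] by (simp add: g_def)
  then show ?thesis by (simp add: exp_minus field_simps)
qed

lemma asymptotically_stable_by_lyapunov:
  fixes f :: "'a::real_normed_vector \<Rightarrow> 'a" and V :: "'a \<Rightarrow> real"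
  assumes m: "m > 0" and U: "U > 0" and lam: "lam > 0"
    and lower: "\<And>y. m * (norm y)\<^sup>2 \<le> V y" and upper: "\<And>y. V y \<le> U * (norm y)\<^sup>2"
    and dV: "\<And>y. (V has_derivative DV y) (at y)"
    and decrease: "\<And>y. DV y (f y) \<le> - lam * V y"
  shows "asymptotically_stable f"
proof -
  have bound: "(norm (x t))\<^sup>2 \<le> U / m * exp (- lam * t) * (norm (x 0))\<^sup>2"
    if sol: "is_solution f x" and t: "t \<ge> 0" for x t
  proof -
    have "m * (norm (x t))\<^sup>2 \<le> exp (- lam * t) * V (x 0)"
      using lower[of "x t"] lyapunov_exponential_decay[OF dV decrease sol t] by linarith
    also have "\<dots> \<le> exp (- lam * t) * (U * (norm (x 0))\<^sup>2)"
      using upper[of "x 0"] by (simp add: mult_left_mono)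
    finally show ?thesis using m by (simp add: field_simps)
  qed
  show ?thesis unfolding asymptotically_stable_def
  proof (intro conjI allI impI)
    fix e :: real assume e: "e > 0"
    define d where "d = e * sqrt (m / U)"
    show "\<exists>d>0. \<forall>x. is_solution f x \<and> norm (x 0) < d \<longrightarrow> (\<forall>t\<ge>0. norm (x t) < e)"
    proof (intro exI[of _ d] conjI allI impI)
      show "d > 0" using e m U by (simp add: d_def)
      fix x and t :: real assume x: "is_solution f x \<and> norm (x 0) < d" and t: "t \<ge> 0"
      have "(norm (x t))\<^sup>2 \<le> U / m * exp (- lam * t) * (norm (x 0))\<^sup>2" using bound x t by blast
      also have "\<dots> \<le> U / m * (norm (x 0))\<^sup>2"
        using m U lam t by (intro mult_right_mono) (auto simp: field_simps)
      also have "\<dots> < U / m * d\<^sup>2"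
        using x m U by (intro mult_strict_left_mono power_strict_mono) auto
      also have "\<dots> = e\<^sup>2" using m U e by (simp add: d_def power_mult_distrib)
      finally show "norm (x t) < e" using e by (simp add: power_less_imp_less_base)
    qed
  next
    show "\<exists>d>0. \<forall>x. is_solution f x \<and> norm (x 0) < d \<longrightarrow> (x \<longlongrightarrow> 0) at_top"
    proof (intro exI[of _ 1] conjI allI impI)
      fix x assume x: "is_solution f x \<and> norm (x 0) < 1"
      define C where "C = U / m * (norm (x 0))\<^sup>2"
      show "(x \<longlongrightarrow> 0) at_top"
      proof (rule Lim_null_comparison)
        show "\<forall>\<^sub>F t in at_top. norm (x t) \<le> sqrt (C * exp (- lam * t))"
          using eventually_ge_at_top[of 0]
        proof eventually_elim
          case (elim t)
          then have "(norm (x t))\<^sup>2 \<le> C * exp (- lam * t)"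
            using bound[of x t] x by (simp add: C_def ac_simps)
          then show ?case by (simp add: real_le_rsqrt)
        qed
        have "LIM t at_top. lam * t :> at_top"
          by (rule filterlim_tendsto_pos_mult_at_top[OF tendsto_const lam filterlim_ident])
        then have "LIM t at_top. - lam * t :> at_bot"
          by (simp add: filterlim_uminus_at_bot)
        then have "((\<lambda>t. exp (- lam * t)) \<longlongrightarrow> 0) at_top"
          by (rule filterlim_compose[OF exp_at_bot])
        then have "((\<lambda>t. sqrt (C * exp (- lam * t))) \<longlongrightarrow> sqrt (C * 0)) at_top"
          by (intro tendsto_real_sqrt tendsto_mult_left)
        then show "((\<lambda>t. sqrt (C * exp (- lam * t))) \<longlongrightarrow> 0) at_top" by simp
      qed
    qed simp
  qed
qed

section \<open>Weights along an acyclic graph\<close>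

lemma acyclic_rank:
  fixes r :: "('a::finite \<times> 'a) set"
  assumes "acyclic r"
  obtains h :: "'a \<Rightarrow> nat" where "\<And>i j. (i, j) \<in> r \<Longrightarrow> h i < h j"
proof
  fix i j assume ij: "(i, j) \<in> r"
  have "{k. (k, i) \<in> r\<^sup>+} \<subseteq> {k. (k, j) \<in> r\<^sup>+}"
    using ij by (auto intro: trancl_into_trancl)
  moreover have "i \<in> {k. (k, j) \<in> r\<^sup>+}" "i \<notin> {k. (k, i) \<in> r\<^sup>+}"
    using ij assms by (auto simp only: acyclic_def mem_Collect_eq)
  ultimately show "card {k. (k, i) \<in> r\<^sup>+} < card {k. (k, j) \<in> r\<^sup>+}"
    by (intro psubset_card_mono) auto
qed

lemma acyclic_cascade_weights:
  fixes a :: "'n::finite \<Rightarrow> 'n \<Rightarrow> real" and s K :: "'n \<Rightarrow> real"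
  assumes acyclic: "acyclic {(i, j). a i j \<noteq> 0}"
    and a_nonneg: "\<And>i j. 0 \<le> a i j" and a_le_1: "\<And>i j. a i j \<le> 1"
    and s_pos: "\<And>i. s i > 0" and K_nonneg: "\<And>i. K i \<ge> 0"
  obtains w where "\<And>i. w i \<ge> 1"
    and "\<And>D n. (\<And>i. 0 \<le> n i) \<Longrightarrow> (\<And>i. D i \<le> - s i * n i + K i * (\<Sum>j\<in>UNIV. a i j * n j))
           \<Longrightarrow> (\<Sum>i\<in>UNIV. w i * D i) \<le> - (\<Sum>i\<in>UNIV. w i * (s i / 2) * n i)"
proof -
  obtain h :: "'n \<Rightarrow> nat" where "\<And>i j. (i, j) \<in> {(i, j). a i j \<noteq> 0} \<Longrightarrow> h i < h j"
    using acyclic_rank[OF acyclic] by metis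
  then have h: "h i < h j" if "a i j \<noteq> 0" for i j
    using that by simp
  define smin where "smin = Min (range s)"
  define M where "M = 1 + 2 * sum K UNIV / smin"
  define w where "w i = M ^ h i" for i
  have smin: "smin > 0" "\<And>j. smin \<le> s j"
    using s_pos by (auto simp: smin_def)
  have K_sum: "sum K UNIV \<ge> 0"
    using K_nonneg by (simp add: sum_nonneg)
  have M: "M \<ge> 1" "2 * sum K UNIV \<le> s j * M" for j
  proof -
    have "2 * sum K UNIV \<le> smin * M"
      using smin(1) by (simp add: M_def field_simps)
    also have "\<dots> \<le> s j * M"
      using smin K_sum by (intro mult_right_mono) (simp_all add: M_def)
    finally show "2 * sum K UNIV \<le> s j * M" .
    show "M \<ge> 1" using smin(1) K_sum by (simp add: M_def)
  qed
  have w_ge_1: "w i \<ge> 1" for i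
    using M(1) by (simp add: w_def)
  have w_edge: "w i * a i j \<le> w j / M" for i j
  proof (cases "a i j = 0")
    case True then show ?thesis using w_ge_1[of j] M(1) by simp
  next
    case False
    then have "M * w i \<le> w j"
      using h[OF False] M(1) by (simp add: w_def power_increasing flip: power_Suc)
    then have "w i \<le> w j / M"
      using M(1) by (simp add: field_simps)
    moreover have "w i * a i j \<le> w i"
      using a_le_1[of i j] w_ge_1[of i] by (simp add: mult_left_le)
    ultimately show ?thesis by linarith
  qed
  have inflow: "(\<Sum>i\<in>UNIV. w i * K i * a i j) \<le> w j * (s j / 2)" for j
  proof -
    have "(\<Sum>i\<in>UNIV. w i * K i * a i j) \<le> (\<Sum>i\<in>UNIV. K i * (w j / M))"
    proof (rule sum_mono)
      fix i
      show "w i * K i * a i j \<le> K i * (w j / M)"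
        using mult_left_mono[OF w_edge[of i j] K_nonneg[of i]] by (simp add: ac_simps)
    qed
    also have "\<dots> = sum K UNIV * w j / M"
      by (simp add: sum_distrib_right sum_divide_distrib)
    also have "\<dots> \<le> w j * (s j / 2)"
      using M(2)[of j] M(1) w_ge_1[of j] by (simp add: field_simps mult_left_mono)
    finally show ?thesis .
  qed
  show ?thesis
  proof (rule that[OF w_ge_1])
    fix D n :: "'n \<Rightarrow> real"
    assume n: "\<And>i. 0 \<le> n i" and D: "\<And>i. D i \<le> - s i * n i + K i * (\<Sum>j\<in>UNIV. a i j * n j)"
    have "(\<Sum>i\<in>UNIV. w i * D i) \<le> (\<Sum>i\<in>UNIV. w i * (- s i * n i + K i * (\<Sum>j\<in>UNIV. a i j * n j)))"
      using D w_ge_1 by (intro sum_mono mult_left_mono) (auto intro: order_trans[OF zero_le_one])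
    also have "\<dots> = - (\<Sum>i\<in>UNIV. w i * s i * n i) + (\<Sum>i\<in>UNIV. \<Sum>j\<in>UNIV. w i * K i * a i j * n j)"
      by (simp add: algebra_simps sum.distrib sum_subtractf sum_distrib_left)
    also have "\<dots> = - (\<Sum>i\<in>UNIV. w i * s i * n i) + (\<Sum>j\<in>UNIV. (\<Sum>i\<in>UNIV. w i * K i * a i j) * n j)"
      by (subst sum.swap) (simp add: sum_distrib_right)
    also have "\<dots> \<le> - (\<Sum>i\<in>UNIV. w i * s i * n i) + (\<Sum>j\<in>UNIV. w j * (s j / 2) * n j)"
      using inflow n by (simp only: add_le_cancel_left) (intro sum_mono mult_right_mono)
    also have "\<dots> = - (\<Sum>i\<in>UNIV. w i * (s i / 2) * n i)"
      by (simp add: sum.distrib[symmetric] field_simps sum_divide_distrib[symmetric])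
    finally show "(\<Sum>i\<in>UNIV. w i * D i) \<le> - (\<Sum>i\<in>UNIV. w i * (s i / 2) * n i)" .
  qed
qed

section \<open>A single vehicle under Riccati feedback\<close>

lemma young_sum_bound:
  fixes a v :: "'n::finite \<Rightarrow> real" and d u \<alpha> :: real
  assumes a_nonneg: "\<And>j. 0 \<le> a j" and a_le_1: "\<And>j. a j \<le> 1" and d: "d > 0"
  shows "2 * \<alpha> * u * (\<Sum>j\<in>UNIV. a j * v j) \<le> real CARD('n) * d * u\<^sup>2 + (\<alpha>\<^sup>2 / d) * (\<Sum>j\<in>UNIV. a j * (v j)\<^sup>2)"
proof -
  have summand: "2 * \<alpha> * u * (a j * v j) \<le> d * u\<^sup>2 + (\<alpha>\<^sup>2 / d) * (a j * (v j)\<^sup>2)" for j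
  proof -
    have "0 \<le> (d * u - \<alpha> * v j)\<^sup>2" by simp
    then have "2 * \<alpha> * u * v j \<le> d * u\<^sup>2 + (\<alpha>\<^sup>2 / d) * (v j)\<^sup>2"
      using d by (simp add: field_simps power2_eq_square)
    then have "a j * (2 * \<alpha> * u * v j) \<le> a j * (d * u\<^sup>2 + (\<alpha>\<^sup>2 / d) * (v j)\<^sup>2)"
      using a_nonneg by (simp add: mult_left_mono)
    moreover have "a j * (d * u\<^sup>2) \<le> d * u\<^sup>2"
      using a_nonneg a_le_1 d by (simp add: mult_left_le_one_le)
    ultimately show ?thesis by (simp add: algebra_simps)
  qed
  have "2 * \<alpha> * u * (\<Sum>j\<in>UNIV. a j * v j) = (\<Sum>j\<in>UNIV. 2 * \<alpha> * u * (a j * v j))"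
    by (simp add: sum_distrib_left)
  also have "\<dots> \<le> (\<Sum>j\<in>UNIV. d * u\<^sup>2 + (\<alpha>\<^sup>2 / d) * (a j * (v j)\<^sup>2))"
    by (intro sum_mono summand)
  also have "\<dots> = real CARD('n) * d * u\<^sup>2 + (\<alpha>\<^sup>2 / d) * (\<Sum>j\<in>UNIV. a j * (v j)\<^sup>2)"
    by (simp add: sum.distrib sum_distrib_left)
  finally show ?thesis .
qed

lemma cross_term_bound:
  fixes q z :: "'v::real_inner" and zs :: "'n::finite \<Rightarrow> 'v" and a :: "'n \<Rightarrow> real"
  assumes a_nonneg: "\<And>j. 0 \<le> a j" and a_le_1: "\<And>j. a j \<le> 1" and e: "e > 0"
  shows "2 * \<alpha> * (q \<bullet> z) * (\<Sum>j\<in>UNIV. a j * (q \<bullet> zs j))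
    \<le> e / 2 * (z \<bullet> z) + 2 * real CARD('n) * \<alpha>\<^sup>2 * (q \<bullet> q) * (q \<bullet> q + 1) / e * (\<Sum>j\<in>UNIV. a j * (zs j \<bullet> zs j))"
proof -
  \<comment> \<open>Young's inequality with this weight spends at most half of the dissipation on the own term.\<close>
  define d where "d = e / (2 * CARD('n) * (q \<bullet> q + 1))"
  have qq: "q \<bullet> q \<ge> 0" by simp
  have N: "real CARD('n) > 0" by simp
  have d: "d > 0" using e qq by (simp add: d_def add_nonneg_pos)
  have Nd: "CARD('n) * d = e / (2 * (q \<bullet> q + 1))" using N by (simp add: d_def)
  have "CARD('n) * d * (q \<bullet> z)\<^sup>2 \<le> CARD('n) * d * ((q \<bullet> q) * (z \<bullet> z))"
    using d by (intro mult_left_mono Cauchy_Schwarz_ineq) auto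
  also have "\<dots> = e / (2 * (q \<bullet> q + 1)) * (q \<bullet> q) * (z \<bullet> z)"
    by (simp only: Nd mult.assoc)
  also have "\<dots> \<le> e / 2 * (z \<bullet> z)"
  proof (rule mult_right_mono)
    have "e / (2 * (q \<bullet> q + 1)) * (q \<bullet> q) = e / 2 * ((q \<bullet> q) / (q \<bullet> q + 1))"
      by simp
    also have "\<dots> \<le> e / 2"
      using e qq by (intro mult_left_le) (simp_all add: divide_le_eq_1 add_nonneg_pos)
    finally show "e / (2 * (q \<bullet> q + 1)) * (q \<bullet> q) \<le> e / 2" .
  qed simp
  finally have own: "CARD('n) * d * (q \<bullet> z)\<^sup>2 \<le> e / 2 * (z \<bullet> z)" .
  have "(\<Sum>j\<in>UNIV. a j * (q \<bullet> zs j)\<^sup>2) \<le> (\<Sum>j\<in>UNIV. a j * ((q \<bullet> q) * (zs j \<bullet> zs j)))"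
    using a_nonneg by (intro sum_mono mult_left_mono Cauchy_Schwarz_ineq)
  also have "\<dots> = (q \<bullet> q) * (\<Sum>j\<in>UNIV. a j * (zs j \<bullet> zs j))"
    by (simp add: sum_distrib_left ac_simps)
  finally have "(\<alpha>\<^sup>2 / d) * (\<Sum>j\<in>UNIV. a j * (q \<bullet> zs j)\<^sup>2) \<le> (\<alpha>\<^sup>2 / d) * ((q \<bullet> q) * (\<Sum>j\<in>UNIV. a j * (zs j \<bullet> zs j)))"
    using d by (intro mult_left_mono) simp_all
  also have "\<dots> = 2 * real CARD('n) * \<alpha>\<^sup>2 * (q \<bullet> q) * (q \<bullet> q + 1) / e * (\<Sum>j\<in>UNIV. a j * (zs j \<bullet> zs j))"
    using e qq N by (simp add: d_def field_simps)
  finally show ?thesis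
    using young_sum_bound[where a=a and \<alpha>=\<alpha> and u="q \<bullet> z" and v="\<lambda>j. q \<bullet> zs j", OF a_nonneg a_le_1 d] own by linarith
qed

lemma riccati_quadratic_identity:
  fixes Q A :: "real^3^3" and B :: "real^1^3"
  assumes ric: "riccati Q A B e" and sym: "transpose Q = Q"
  defines "q \<equiv> (transpose B ** Q) $ 1"
  shows "2 * (z \<bullet> (Q *v (A *v z - B *v vector [s]))) = (q \<bullet> z)\<^sup>2 - e * (z \<bullet> z) - 2 * (q \<bullet> z) * s"
proof -
  have out: "transpose B *v (Q *v z) = vector [q \<bullet> z]"
    by (simp add: vec_eq_iff q_def matrix_vector_mul_assoc matrix_vector_mul_component)
  have input: "z \<bullet> (Q *v (B *v w)) = (q \<bullet> z) * w $ 1" for w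
  proof -
    have "z \<bullet> (Q *v (B *v w)) = (transpose B *v (Q *v z)) \<bullet> w"
      by (simp only: inner_matrix_vector_transpose[of z Q] inner_matrix_vector_transpose[of _ B] sym)
    then show ?thesis by (simp only: out inner_real1) simp
  qed
  have drift: "z \<bullet> (transpose A *v (Q *v z)) = z \<bullet> (Q *v (A *v z))"
    by (metis inner_commute inner_matrix_vector_transpose sym transpose_transpose)
  have "z \<bullet> ((Q ** A + transpose A ** Q - Q ** B ** transpose B ** Q + e *\<^sub>R mat 1) *v z) = 0"
    using ric by (simp add: riccati_def)
  then have "2 * (z \<bullet> (Q *v (A *v z))) = (q \<bullet> z)\<^sup>2 - e * (z \<bullet> z)"
    by (simp add: matrix_vector_mult_add_rdistrib matrix_vector_mult_diff_rdistrib inner_add_right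
        inner_diff_right scaleR_matrix_vector_assoc[symmetric] drift input out power2_eq_square
        del: transpose_matrix_vector flip: matrix_vector_mul_assoc)
  then show ?thesis
    by (simp add: matrix_vector_mult_diff_distrib inner_diff_right input)
qed

lemma riccati_psd_imp_pos_def:
  fixes Q A :: "real^3^3" and B :: "real^1^3"
  assumes psd: "psd Q" and ric: "riccati Q A B e" and e: "e > 0" and z: "z \<noteq> 0"
  shows "z \<bullet> (Q *v z) > 0"
proof (rule ccontr)
  assume "\<not> z \<bullet> (Q *v z) > 0"
  then have Qz: "Q *v z = 0"
    using psd psd_quadratic_form_eq_0_imp unfolding psd_def by (metis order_less_le)
  have sym: "transpose Q = Q" using psd by (simp add: psd_def)
  have "z \<bullet> (Q *v w) = 0" for w
    using inner_matrix_vector_transpose[of z Q w] by (simp add: sym Qz)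
  moreover have "(transpose B ** Q) $ 1 \<bullet> z = 0"
    by (metis Qz matrix_vector_mul_assoc matrix_vector_mul_component matrix_vector_mult_0_right zero_index)
  ultimately have "e * (z \<bullet> z) = 0"
    using riccati_quadratic_identity[OF ric sym, of z 0] by simp
  then show False using e z by simp
qed

lemma riccati_feedback_estimate:
  fixes Q A :: "real^3^3" and B :: "real^1^3" and zs :: "'n::finite \<Rightarrow> real^3" and a :: "'n \<Rightarrow> real"
    and \<alpha> c :: real
  assumes ric: "riccati Q A B e" and sym: "transpose Q = Q" and e: "e > 0"
    and a_nonneg: "\<And>j. 0 \<le> a j" and a_le_1: "\<And>j. a j \<le> 1" and high_gain: "2 * \<alpha> * c \<ge> 1"
  defines "q \<equiv> (transpose B ** Q) $ 1"
  shows "2 * (z \<bullet> (Q *v (A *v z - B *v vector [\<alpha> * (q \<bullet> (c *\<^sub>R z - (\<Sum>j\<in>UNIV. a j *\<^sub>R zs j)))])))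
    \<le> - (e / 2) * (z \<bullet> z) + 2 * real CARD('n) * \<alpha>\<^sup>2 * (q \<bullet> q) * (q \<bullet> q + 1) / e * (\<Sum>j\<in>UNIV. a j * (zs j \<bullet> zs j))"
proof -
  have "2 * (z \<bullet> (Q *v (A *v z - B *v vector [\<alpha> * (q \<bullet> (c *\<^sub>R z - (\<Sum>j\<in>UNIV. a j *\<^sub>R zs j)))])))
      = (1 - 2 * \<alpha> * c) * (q \<bullet> z)\<^sup>2 - e * (z \<bullet> z) + 2 * \<alpha> * (q \<bullet> z) * (\<Sum>j\<in>UNIV. a j * (q \<bullet> zs j))"
    unfolding riccati_quadratic_identity[OF ric sym, folded q_def]
    by (simp add: inner_sum_right algebra_simps power2_eq_square)
  also have "\<dots> \<le> - e * (z \<bullet> z) + 2 * \<alpha> * (q \<bullet> z) * (\<Sum>j\<in>UNIV. a j * (q \<bullet> zs j))"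
    using high_gain by (simp add: mult_nonpos_nonneg)
  finally show ?thesis
    using cross_term_bound[where a=a and \<alpha>=\<alpha> and q=q and z=z and zs=zs, OF a_nonneg a_le_1 e] by linarith
qed

section \<open>The platoon\<close>

definition node_state :: "'n \<Rightarrow> (real^'n) \<times> (real^'n) \<times> (real^'n) \<Rightarrow> real^3" where
  "node_state i = (\<lambda>(p, v, a). vector [p $ i, v $ i, a $ i])"

lemma bounded_linear_node_state: "bounded_linear (node_state i)"
  by (intro linear_conv_bounded_linear[THEN iffD1] linearI)
    (auto simp: node_state_def vec_eq_iff forall_3)

lemma norm_sq_eq_sum_node_state:
  "(norm y)\<^sup>2 = (\<Sum>j\<in>UNIV. node_state j y \<bullet> node_state j y)"
  by (cases y) (simp add: node_state_def power2_norm_eq_inner inner_vec_def sum_3 sum.distrib)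

lemma diagm_mult_component: "(diagm d ** G *v x) $ i = d i * (G *v x) $ i"
  by (simp add: diagm_def matrix_vector_mult_def matrix_matrix_mult_def sum_distrib_left mult.assoc
      if_distrib[of "\<lambda>z. z * _"] cong: if_cong)

lemma diagm_vector_component: "(diagm d *v x) $ i = d i * x $ i"
  using diagm_mult_component[of d "mat 1"] by simp

lemma veh_A_mult: "veh_A tau *v z = vector [z $ 2, z $ 3, - z $ 3 / tau]"
  by (simp add: veh_A_def vec_eq_iff forall_3 matrix_vector_mult_def sum_3)

lemma veh_B_mult: "veh_B tau *v w = vector [0, 0, w $ 1 / tau]"
  by (simp add: veh_B_def vec_eq_iff forall_3 matrix_vector_mult_def)

lemma node_state_closed_loop:
  "node_state i (closed_loop (diagm (\<lambda>i. k i $ 1 / tau i)) (diagm (\<lambda>i. k i $ 2 / tau i))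
      (diagm (\<lambda>i. k i $ 3 / tau i)) (diagm (\<lambda>i. 1 / tau i)) G (p, v, a))
   = veh_A (tau i) *v node_state i (p, v, a) - veh_B (tau i) *v vector [k i \<bullet> node_state i (G *v p, G *v v, G *v a)]"
  by (simp add: closed_loop_def node_state_def veh_A_mult veh_B_mult vec_eq_iff forall_3 inner_vec_def sum_3
      diagm_mult_component diagm_vector_component matrix_vector_mult_add_rdistrib)
    (simp add: add_divide_distrib ac_simps)

lemma laplacian_pinning_component:
  assumes "pinning Pm"
  shows "((laplacian Adj + Pm) *v x) $ i = (degm Adj $ i $ i + Pm $ i $ i) * x $ i - (\<Sum>j\<in>UNIV. Adj $ i $ j * x $ j)"
proof -
  have "(Pm *v x) $ i = (\<Sum>j\<in>UNIV. if j = i then Pm $ i $ i * x $ i else 0)"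
    using assms unfolding pinning_def matrix_vector_mult_def vec_lambda_beta by (intro sum.cong) auto
  then have "(Pm *v x) $ i = Pm $ i $ i * x $ i"
    by simp
  moreover have "(degm Adj *v x) $ i = degm Adj $ i $ i * x $ i"
    unfolding degm_def by (simp add: diagm_vector_component) (simp add: diagm_def)
  moreover have "((laplacian Adj + Pm) *v x) $ i = (degm Adj *v x) $ i - (Adj *v x) $ i + (Pm *v x) $ i"
    by (simp add: laplacian_def matrix_vector_mult_add_rdistrib matrix_vector_mult_diff_rdistrib)
  moreover have "(Adj *v x) $ i = (\<Sum>j\<in>UNIV. Adj $ i $ j * x $ j)"
    by (simp add: matrix_vector_mult_def)
  ultimately show ?thesis
    by (simp add: algebra_simps)
qed

lemma node_state_laplacian_pinning:
  fixes Adj Pm :: "real^'n::finite^'n"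
  assumes pin: "pinning Pm"
  defines "G \<equiv> laplacian Adj + Pm"
  shows "node_state i (G *v p, G *v v, G *v a)
    = (degm Adj $ i $ i + Pm $ i $ i) *\<^sub>R node_state i (p, v, a) - (\<Sum>j\<in>UNIV. Adj $ i $ j *\<^sub>R node_state j (p, v, a))"
  unfolding G_def node_state_def
  by (simp only: vec_eq_iff forall_3 laplacian_pinning_component[OF pin] sum_component vector_3
      vector_minus_component vector_scaleR_component prod.case) simp

lemma asymptotically_stable_by_node_lyapunov:
  fixes f :: "(real^'n::finite) \<times> (real^'n) \<times> (real^'n) \<Rightarrow> (real^'n) \<times> (real^'n) \<times> (real^'n)"
    and P :: "'n \<Rightarrow> real^3^3" and a :: "'n \<Rightarrow> 'n \<Rightarrow> real" and s K :: "'n \<Rightarrow> real"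
  assumes acyclic: "acyclic {(i, j). a i j \<noteq> 0}"
    and a_nonneg: "\<And>i j. 0 \<le> a i j" and a_le_1: "\<And>i j. a i j \<le> 1"
    and s_pos: "\<And>i. s i > 0" and K_nonneg: "\<And>i. K i \<ge> 0"
    and sym: "\<And>i. transpose (P i) = P i" and pos_def: "\<And>i z. z \<noteq> 0 \<Longrightarrow> z \<bullet> (P i *v z) > 0"
    and node: "\<And>i y. 2 * (node_state i y \<bullet> (P i *v node_state i (f y)))
      \<le> - s i * (node_state i y \<bullet> node_state i y) + K i * (\<Sum>j\<in>UNIV. a i j * (node_state j y \<bullet> node_state j y))"
  shows "asymptotically_stable f"
proof -
  obtain w where w_ge_1: "\<And>i. w i \<ge> 1"
    and cascade: "\<And>D n. (\<And>i. 0 \<le> n i) \<Longrightarrow> (\<And>i. D i \<le> - s i * n i + K i * (\<Sum>j\<in>UNIV. a i j * n j))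
      \<Longrightarrow> (\<Sum>i\<in>UNIV. w i * D i) \<le> - (\<Sum>i\<in>UNIV. w i * (s i / 2) * n i)"
    using acyclic_cascade_weights[where s=s and K=K, OF acyclic a_nonneg a_le_1 s_pos K_nonneg] by blast
  have "\<exists>m U. m > 0 \<and> U > 0 \<and> (\<forall>z. m * (z \<bullet> z) \<le> z \<bullet> (P i *v z) \<and> z \<bullet> (P i *v z) \<le> U * (z \<bullet> z))" for i
  proof (rule pos_def_quadratic_form_bounds[of "P i"])
    show "z \<bullet> (P i *v z) > 0" if "z \<noteq> 0" for z using that by (rule pos_def)
  qed blast
  then obtain m U where m_pos: "\<And>i. m i > 0" and U_pos: "\<And>i. U i > 0"
    and bounds: "\<And>i z. m i * (z \<bullet> z) \<le> z \<bullet> (P i *v z) \<and> z \<bullet> (P i *v z) \<le> U i * (z \<bullet> z)"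
    by metis
  define n where "n y j = node_state j y \<bullet> node_state j y"
    for y :: "(real^'n) \<times> (real^'n) \<times> (real^'n)" and j
  define V where "V y = (\<Sum>i\<in>UNIV. w i * (node_state i y \<bullet> (P i *v node_state i y)))" for y
  define DV where "DV y d = (\<Sum>i\<in>UNIV. w i * (2 * (node_state i y \<bullet> (P i *v node_state i d))))" for y d
  define mmin where "mmin = Min (range m)"
  define lam where "lam = Min (range (\<lambda>i. s i / (2 * U i)))"
  have lam_pos: "lam > 0"
    using s_pos U_pos by (simp add: lam_def)
  have lam_U: "lam * U i \<le> s i / 2" for i
  proof -
    have "lam \<le> s i / (2 * U i)"
      unfolding lam_def by (rule Min_le) auto
    then show ?thesis using U_pos[of i] by (simp add: field_simps)
  qed
  have n_nonneg: "0 \<le> n y j" for y j by (simp add: n_def)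
  have P_nonneg: "0 \<le> z \<bullet> (P i *v z)" for i z
    using bounds[of i z] m_pos[of i] by (meson inner_ge_zero less_imp_le mult_nonneg_nonneg order_trans)
  have norm_sq: "(norm y)\<^sup>2 = (\<Sum>j\<in>UNIV. n y j)" for y
    by (simp add: n_def norm_sq_eq_sum_node_state)
  have V_upper_nodes: "V y \<le> (\<Sum>i\<in>UNIV. w i * U i * n y i)" for y
    unfolding V_def n_def using bounds w_ge_1
    by (intro sum_mono) (simp add: mult.assoc mult_left_mono order_trans[OF zero_le_one])
  have V_upper: "V y \<le> (\<Sum>i\<in>UNIV. w i * U i) * (norm y)\<^sup>2" for y
  proof -
    have "(\<Sum>i\<in>UNIV. w i * U i * n y i) \<le> (\<Sum>i\<in>UNIV. w i * U i * (norm y)\<^sup>2)"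
    proof (intro sum_mono mult_left_mono)
      show "n y i \<le> (norm y)\<^sup>2" for i
        unfolding norm_sq by (rule member_le_sum) (simp_all add: n_nonneg)
      show "0 \<le> w i * U i" for i
        using w_ge_1[of i] U_pos[of i] by simp
    qed
    then show ?thesis
      using V_upper_nodes[of y] by (simp add: sum_distrib_right)
  qed
  have V_lower: "mmin * (norm y)\<^sup>2 \<le> V y" for y
  proof -
    have "mmin * (norm y)\<^sup>2 = (\<Sum>i\<in>UNIV. mmin * n y i)"
      by (simp add: norm_sq sum_distrib_left)
    also have "\<dots> \<le> (\<Sum>i\<in>UNIV. w i * (node_state i y \<bullet> (P i *v node_state i y)))"
    proof (rule sum_mono)
      fix i
      have "mmin * n y i \<le> m i * n y i"
        using n_nonneg by (intro mult_right_mono) (simp_all add: mmin_def)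
      also have "\<dots> \<le> 1 * (node_state i y \<bullet> (P i *v node_state i y))"
        using bounds by (simp add: n_def)
      also have "\<dots> \<le> w i * (node_state i y \<bullet> (P i *v node_state i y))"
        using w_ge_1 P_nonneg by (intro mult_right_mono)
      finally show "mmin * n y i \<le> w i * (node_state i y \<bullet> (P i *v node_state i y))" .
    qed
    finally show ?thesis by (simp add: V_def)
  qed
  have decrease: "DV y (f y) \<le> - lam * V y" for y
  proof -
    have "DV y (f y) \<le> - (\<Sum>i\<in>UNIV. w i * (s i / 2) * n y i)"
      unfolding DV_def n_def by (rule cascade) (simp, rule node)
    also have "\<dots> \<le> - (\<Sum>i\<in>UNIV. lam * (w i * U i * n y i))"
    proof (intro le_imp_neg_le sum_mono)
      fix i
      have "0 \<le> w i * n y i" using w_ge_1[of i] n_nonneg[of y i] by simp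
      with lam_U have "(lam * U i) * (w i * n y i) \<le> (s i / 2) * (w i * n y i)"
        by (rule mult_right_mono)
      then show "lam * (w i * U i * n y i) \<le> w i * (s i / 2) * n y i"
        by (simp add: ac_simps)
    qed
    also have "\<dots> \<le> - lam * V y"
      using mult_left_mono[OF V_upper_nodes[of y] less_imp_le[OF lam_pos]]
      by (simp add: sum_distrib_left)
    finally show ?thesis .
  qed
  have dV: "(V has_derivative DV y) (at y)" for y
    unfolding V_def[abs_def] DV_def
    by (intro has_derivative_sum has_derivative_mult_right has_derivative_quadratic_form
        bounded_linear_node_state sym)
  have mmin_pos: "mmin > 0"
    using m_pos by (simp add: mmin_def)
  have U_sum_pos: "(\<Sum>i\<in>UNIV. w i * U i) > 0"
    using w_ge_1 U_pos by (intro sum_pos) (auto intro: mult_pos_pos less_le_trans[OF zero_less_one])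
  show ?thesis
    by (rule asymptotically_stable_by_lyapunov[where V=V and DV=DV and f=f,
          OF mmin_pos U_sum_pos lam_pos V_lower V_upper dV decrease])
qed

lemma adjacency_entry_bounds:
  assumes "adjacency Adj"
  shows "0 \<le> Adj $ i $ j" "Adj $ i $ j \<le> 1"
  using assms unfolding adjacency_def by (metis order_refl zero_le_one)+

lemma is_DAG_imp_acyclic_support:
  assumes "adjacency Adj" "is_DAG Adj"
  shows "acyclic {(i, j). Adj $ i $ j \<noteq> 0}"
proof -
  have "edges Adj = {(i, j). Adj $ i $ j \<noteq> 0}"
    using assms(1) unfolding adjacency_def edges_def by auto
  then show ?thesis
    using assms(2) by (simp add: is_DAG_def)
qed

lemma row_matrix_eq_scaleR:
  fixes x :: "real^'m::finite" and M :: "real^'m^1"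
  assumes "(\<chi> r c. x $ c :: real^'m^1) = \<alpha> *\<^sub>R M"
  shows "x = \<alpha> *\<^sub>R M $ 1"
  unfolding vec_eq_iff
proof
  fix c
  have "(\<chi> r c. x $ c :: real^'m^1) $ 1 $ c = (\<alpha> *\<^sub>R M) $ 1 $ c"
    using assms by simp
  then show "x $ c = (\<alpha> *\<^sub>R M $ 1) $ c" by simp
qed

theorem theorem3:
  fixes Adj Pm :: "real^'n::finite^'n"
    and tau eps alpha :: "'n \<Rightarrow> real"
    and P :: "'n \<Rightarrow> real^3^3"
    and k :: "'n \<Rightarrow> real^3"
  assumes adj: "adjacency Adj"
    and pin: "pinning Pm"
    and dag: "is_DAG Adj"
    and reach: "\<forall>i. degm Adj $ i $ i + Pm $ i $ i > 0"
    and tau_pos: "\<forall>i. tau i > 0"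
    and eps_pos: "\<forall>i. eps i > 0"
    and P_psd: "\<forall>i. psd (P i)"
    and P_ric: "\<forall>i. riccati (P i) (veh_A (tau i)) (veh_B (tau i)) (eps i)"
    and gain: "\<forall>i. (\<chi> r c. k i $ c :: real^3^1) = alpha i *\<^sub>R (transpose (veh_B (tau i)) ** P i)"
    and alpha_ge: "\<forall>i. alpha i \<ge> 1 / (2 * (degm Adj $ i $ i + Pm $ i $ i))"
  shows "asymptotically_stable
           (closed_loop (diagm (\<lambda>i. k i $ 1 / tau i)) (diagm (\<lambda>i. k i $ 2 / tau i))
              (diagm (\<lambda>i. k i $ 3 / tau i)) (diagm (\<lambda>i. 1 / tau i)) (laplacian Adj + Pm))"
    (is "asymptotically_stable ?f")
proof -
  define q where "q i = (transpose (veh_B (tau i)) ** P i) $ 1" for i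
  define K where "K i = 2 * real CARD('n) * (alpha i)\<^sup>2 * (q i \<bullet> q i) * (q i \<bullet> q i + 1) / eps i" for i
  have sym: "transpose (P i) = P i" for i
    using P_psd by (simp add: psd_def)
  note Adj_01 = adjacency_entry_bounds[OF adj]
  have high_gain: "2 * alpha i * (degm Adj $ i $ i + Pm $ i $ i) \<ge> 1" for i
    using alpha_ge[rule_format, of i] reach[rule_format, of i] by (simp add: field_simps)
  have node: "2 * (node_state i y \<bullet> (P i *v node_state i (?f y)))
      \<le> - (eps i / 2) * (node_state i y \<bullet> node_state i y)
        + K i * (\<Sum>j\<in>UNIV. Adj $ i $ j * (node_state j y \<bullet> node_state j y))" for i y
  proof (cases y)
    case (fields p v a)
    have "k i = alpha i *\<^sub>R q i"
      using row_matrix_eq_scaleR[OF gain[rule_format, of i]] by (simp add: q_def)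
    then show ?thesis
      using riccati_feedback_estimate[OF P_ric[rule_format] sym eps_pos[rule_format] Adj_01 high_gain]
      by (simp add: fields node_state_closed_loop node_state_laplacian_pinning[OF pin] K_def q_def)
  qed
  show ?thesis
  proof (rule asymptotically_stable_by_node_lyapunov[OF is_DAG_imp_acyclic_support[OF adj dag] Adj_01 _ _ sym _ node])
    show "eps i / 2 > 0" for i using eps_pos by simp
    show "K i \<ge> 0" for i
      unfolding K_def using eps_pos by (intro divide_nonneg_pos mult_nonneg_nonneg add_nonneg_nonneg) auto
    show "z \<bullet> (P i *v z) > 0" if "z \<noteq> 0" for i z
      using riccati_psd_imp_pos_def P_psd P_ric eps_pos that by blast
  qed
qed

end
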